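(* For all $k>0$, all powers of $x$ that appear in $T_2,T_3,\dots,T_{k+1}$ (written as polynomials in $x$ and $y$ with coefficients in $k$ via the recursive construction) are multiples of $d_k=\gcd(p_1,\dots,p_k)$.
   Context: Setting: $k$ (the base field) is algebraically closed of characteristic $0$; $\nu^*$ is a $k$-valuation of a function field $K^*$ of transcendence degree $2$ with valuation ring $V^*$, value group a subgroup of $\mathbb{Q}$ and residue field $k$; $S$ is an algebraic two-dimensional regular local ring with quotient field $K^*$ dominated by $V^*$, with regular parameters $(x,y)$, and $\nu^*(x)=1$. Jumping polynomials: $T_0=x$, $T_1=y$, $q_0=\infty$, $p_1,q_1$ coprime positive integers with $\nu^*(y)=p_1/q_1$; for $i\ge1$, $n_{i,j}$ ($0\le j<i$) are nonnegative integers with $n_{i,j}<q_j$ and $q_i\nu^*(T_i)=\sum_{j<i}n_{i,j}\nu^*(T_j)$, $\lambda_i\in k$ is the residue of $T_i^{q_i}/\prod_{j<i}T_j^{n_{i,j}}$, $T_{i+1}=T_i^{q_i}-\lambda_i\prod_{j<i}T_j^{n_{i,j}}$, and $p_{i+1},q_{i+1}$ are coprime positive integers with $\nu^*(T_{i+1})=q_i\nu^*(T_i)+\frac{1}{q_1\cdots q_i}\frac{p_{i+1}}{q_{i+1}}$. *)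

theory Defs
  imports "HOL-Computational_Algebra.Polynomial"
begin

(* Bivariate polynomials over k are represented as 'k poly poly:
   the outer variable is y, the coefficients are polynomials in x.
   So the monomial x^a y^b has coefficient  coeff (coeff P b) a. *)

definition varX :: "'k::comm_ring_1 poly poly" where
  "varX = [: [:0, 1:] :]"

definition varY :: "'k::comm_ring_1 poly poly" where
  "varY = [:0, 1:]"

definition constK :: "'k::comm_ring_1 \<Rightarrow> 'k poly poly" where
  "constK c = [: [:c:] :]"

fun nuT :: "(nat \<Rightarrow> nat) \<Rightarrow> (nat \<Rightarrow> nat) \<Rightarrow> nat \<Rightarrow> rat" where
  "nuT p q 0 = 1"
| "nuT p q (Suc 0) = of_nat (p 1) / of_nat (q 1)"
| "nuT p q (Suc (Suc i)) =
     of_nat (q (Suc i)) * nuT p q (Suc i)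
     + (1 / (\<Prod>j\<in>{1..Suc i}. of_nat (q j))) * (of_nat (p (Suc (Suc i))) / of_nat (q (Suc (Suc i))))"

fun Tlist :: "(nat \<Rightarrow> nat) \<Rightarrow> (nat \<Rightarrow> nat \<Rightarrow> nat) \<Rightarrow> (nat \<Rightarrow> 'k::comm_ring_1)
               \<Rightarrow> nat \<Rightarrow> 'k poly poly list" where
  "Tlist q n lam 0 = [varX]"
| "Tlist q n lam (Suc 0) = [varX, varY]"
| "Tlist q n lam (Suc (Suc m)) =
     (let L = Tlist q n lam (Suc m); i = Suc m in
      L @ [L ! i ^ q i - constK (lam i) * (\<Prod>j<i. (L ! j) ^ n i j)])"

definition Tpoly :: "(nat \<Rightarrow> nat) \<Rightarrow> (nat \<Rightarrow> nat \<Rightarrow> nat) \<Rightarrow> (nat \<Rightarrow> 'k::comm_ring_1)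
               \<Rightarrow> nat \<Rightarrow> 'k poly poly" where
  "Tpoly q n lam i = Tlist q n lam i ! i"

definition x_power_occurs :: "'k::comm_ring_1 poly poly \<Rightarrow> nat \<Rightarrow> bool" where
  "x_power_occurs P a \<longleftrightarrow> (\<exists>b. coeff (coeff P b) a \<noteq> 0)"

end

theory Submission
  imports Defs
begin

(* Polynomials whose x-exponents are all multiples of d form a subring of k[x,y] containing
   y and the constants, so by the recursion T_2, ..., T_{k+1} lie in it as soon as d divides
   every exponent n_{i,0} of T_0 = x.  To get d | n_{i,0}, multiply the relation
   q_i nu(T_i) = sum_j n_{i,j} nu(T_j) by q_1 ... q_{i-1}: the numbers (q_1 ... q_m) nu(T_j),
   j <= m, are naturals built from the p_j by N_{j+1} = q_{j+1} q_j N_j + p_{j+1}, hence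
   multiples of d.  So d divides (q_1 ... q_{i-1}) n_{i,0}, and d is coprime to each q_j
   because q_j is coprime to p_j. *)

definition exponents_dvd :: "nat \<Rightarrow> 'a::zero poly \<Rightarrow> bool" where
  "exponents_dvd d A \<longleftrightarrow> (\<forall>a. coeff A a \<noteq> 0 \<longrightarrow> d dvd a)"

lemma exponents_dvd_0 [simp]: "exponents_dvd d 0"
  by (simp add: exponents_dvd_def)

lemma exponents_dvd_const [simp]: "exponents_dvd d [:c:]"
  by (simp add: exponents_dvd_def coeff_pCons split: nat.split)

lemma exponents_dvd_1 [simp]: "exponents_dvd d 1"
  by (simp add: exponents_dvd_def)

lemma exponents_dvd_monom: "d dvd m \<Longrightarrow> exponents_dvd d (monom c m)"
  by (simp add: exponents_dvd_def)

lemma exponents_dvd_add: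
  "exponents_dvd d A \<Longrightarrow> exponents_dvd d B \<Longrightarrow> exponents_dvd d (A + B)"
  unfolding exponents_dvd_def by (metis add.right_neutral coeff_add)

lemma exponents_dvd_minus:
  fixes A :: "'a::ab_group_add poly"
  shows "exponents_dvd d A \<Longrightarrow> exponents_dvd d (- A)"
  by (simp add: exponents_dvd_def)

lemma exponents_dvd_diff:
  fixes A B :: "'a::ab_group_add poly"
  shows "exponents_dvd d A \<Longrightarrow> exponents_dvd d B \<Longrightarrow> exponents_dvd d (A - B)"
  unfolding diff_conv_add_uminus by (intro exponents_dvd_add exponents_dvd_minus)

lemma exponents_dvd_sum:
  "(\<And>i. i \<in> S \<Longrightarrow> exponents_dvd d (f i)) \<Longrightarrow> exponents_dvd d (sum f S)"
  by (induction S rule: infinite_finite_induct) (auto intro: exponents_dvd_add)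

lemma exponents_dvd_mult:
  fixes A B :: "'a::comm_semiring_0 poly"
  assumes "exponents_dvd d A" "exponents_dvd d B"
  shows "exponents_dvd d (A * B)"
  unfolding exponents_dvd_def
proof (intro allI impI)
  fix a assume "coeff (A * B) a \<noteq> 0"
  then obtain i where "i \<le> a" "coeff A i \<noteq> 0" "coeff B (a - i) \<noteq> 0"
    unfolding coeff_mult by (metis (no_types, lifting) atMost_iff mult_not_zero sum.neutral)
  with assms have "d dvd i + (a - i)"
    unfolding exponents_dvd_def by (blast intro: dvd_add)
  with \<open>i \<le> a\<close> show "d dvd a" by simp
qed

definition x_exponents_dvd :: "nat \<Rightarrow> 'a::zero poly poly \<Rightarrow> bool" where
  "x_exponents_dvd d P \<longleftrightarrow> (\<forall>b. exponents_dvd d (coeff P b))"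

lemma x_exponents_dvd_const: "exponents_dvd d c \<Longrightarrow> x_exponents_dvd d [:c:]"
  by (simp add: x_exponents_dvd_def coeff_pCons split: nat.split)

lemma x_exponents_dvd_1 [simp]: "x_exponents_dvd d 1"
  using x_exponents_dvd_const[of d 1] by (simp add: pCons_one)

lemma x_exponents_dvd_diff:
  fixes P R :: "'a::ab_group_add poly poly"
  shows "x_exponents_dvd d P \<Longrightarrow> x_exponents_dvd d R \<Longrightarrow> x_exponents_dvd d (P - R)"
  by (simp add: x_exponents_dvd_def exponents_dvd_diff)

lemma x_exponents_dvd_mult:
  fixes P R :: "'a::comm_semiring_0 poly poly"
  shows "x_exponents_dvd d P \<Longrightarrow> x_exponents_dvd d R \<Longrightarrow> x_exponents_dvd d (P * R)"
  unfolding x_exponents_dvd_def coeff_mult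
  by (intro allI exponents_dvd_sum exponents_dvd_mult) auto

lemma x_exponents_dvd_power:
  fixes P :: "'a::comm_semiring_1 poly poly"
  shows "x_exponents_dvd d P \<Longrightarrow> x_exponents_dvd d (P ^ m)"
  by (induction m) (simp_all add: x_exponents_dvd_mult)

lemma x_exponents_dvd_prod:
  fixes f :: "'b \<Rightarrow> 'a::comm_semiring_1 poly poly"
  shows "(\<And>i. i \<in> S \<Longrightarrow> x_exponents_dvd d (f i)) \<Longrightarrow> x_exponents_dvd d (prod f S)"
  by (induction S rule: infinite_finite_induct) (simp_all add: x_exponents_dvd_mult)

lemma x_exponents_dvd_varY [simp]: "x_exponents_dvd d varY"
  by (simp add: x_exponents_dvd_def varY_def coeff_pCons split: nat.split)

lemma x_exponents_dvd_constK [simp]: "x_exponents_dvd d (constK c)"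
  by (simp add: constK_def x_exponents_dvd_const)

lemma x_exponents_dvd_varX_power: "d dvd m \<Longrightarrow> x_exponents_dvd d (varX ^ m)"
  unfolding varX_def poly_const_pow monom_altdef[of 1 m, simplified, symmetric]
  by (intro x_exponents_dvd_const exponents_dvd_monom)

lemma length_Tlist: "length (Tlist q n lam m) = Suc m"
  by (induction q n lam m rule: Tlist.induct) (simp_all add: Let_def)

lemma nth_Tlist: "j \<le> m \<Longrightarrow> Tlist q n lam m ! j = Tpoly q n lam j"
proof (induction q n lam m rule: Tlist.induct)
  case (3 q n lam m)
  then show ?case
    using length_Tlist[of q n lam "Suc m"]
    by (cases "j = Suc (Suc m)") (simp_all add: Tpoly_def Let_def nth_append)
qed (auto simp: Tpoly_def le_Suc_eq)

lemma Tpoly_0: "Tpoly q n lam 0 = varX"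
  by (simp add: Tpoly_def)

lemma Tpoly_1: "Tpoly q n lam (Suc 0) = varY"
  by (simp add: Tpoly_def)

lemma Tpoly_Suc_Suc:
  "Tpoly q n lam (Suc (Suc m)) = Tpoly q n lam (Suc m) ^ q (Suc m)
     - constK (lam (Suc m)) * (\<Prod>j<Suc m. Tpoly q n lam j ^ n (Suc m) j)"
  using length_Tlist[of q n lam "Suc m"]
  by (simp add: Tpoly_def[of q n lam "Suc (Suc m)"] Let_def nth_append nth_Tlist)

lemma x_exponents_dvd_Tpoly:
  assumes "\<And>i. 1 \<le> i \<Longrightarrow> i \<le> k \<Longrightarrow> d dvd n i 0"
    and "1 \<le> i" "i \<le> Suc k"
  shows "x_exponents_dvd d (Tpoly q n lam i)"
  using assms(2,3)
proof (induction i rule: nat_less_induct)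
  case (1 i)
  consider "i = Suc 0" | m where "i = Suc (Suc m)"
    using "1.prems"(1) by (metis One_nat_def Suc_le_D not0_implies_Suc)
  then show ?case
  proof cases
    case 2
    have "x_exponents_dvd d (Tpoly q n lam j ^ n (Suc m) j)" if "j < Suc m" for j
    proof (cases j)
      case 0
      with assms(1)[of "Suc m"] "1.prems" 2 show ?thesis
        by (simp add: Tpoly_0 x_exponents_dvd_varX_power)
    next
      case Suc
      with "1.IH" "1.prems" 2 that show ?thesis
        by (simp add: x_exponents_dvd_power)
    qed
    then have "x_exponents_dvd d (\<Prod>j<Suc m. Tpoly q n lam j ^ n (Suc m) j)"
      by (intro x_exponents_dvd_prod) simp
    moreover have "x_exponents_dvd d (Tpoly q n lam (Suc m))"
      using "1.IH" "1.prems" 2 by simp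
    ultimately show ?thesis
      unfolding 2 Tpoly_Suc_Suc
      by (simp add: x_exponents_dvd_diff x_exponents_dvd_mult x_exponents_dvd_power)
  qed (simp add: Tpoly_1)
qed

fun nu_numerator :: "(nat \<Rightarrow> nat) \<Rightarrow> (nat \<Rightarrow> nat) \<Rightarrow> nat \<Rightarrow> nat" where
  "nu_numerator p q 0 = 1"
| "nu_numerator p q (Suc 0) = p 1"
| "nu_numerator p q (Suc (Suc i)) =
     q (Suc (Suc i)) * q (Suc i) * nu_numerator p q (Suc i) + p (Suc (Suc i))"

lemma nuT_eq_nu_numerator:
  assumes "\<And>j. 1 \<le> j \<Longrightarrow> j \<le> i \<Longrightarrow> q j > 0"
  shows "(\<Prod>j\<in>{1..i}. of_nat (q j)) * nuT p q i = of_nat (nu_numerator p q i)"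
  using assms
proof (induction p q i rule: nu_numerator.induct)
  case (3 p q i)
  let ?Q = "\<Prod>j\<in>{1..Suc i}. (of_nat (q j) :: rat)"
  have "?Q \<noteq> 0" "q (Suc (Suc i)) > 0"
    using "3.prems" by auto
  moreover have "?Q * nuT p q (Suc i) = of_nat (nu_numerator p q (Suc i))"
    using "3.IH" "3.prems" by simp
  ultimately show ?case
    by (simp add: prod.nat_ivl_Suc' field_simps)
qed simp_all

lemma dvd_nu_numerator:
  assumes "\<And>j. 1 \<le> j \<Longrightarrow> j \<le> i \<Longrightarrow> d dvd p j" and "1 \<le> i"
  shows "d dvd nu_numerator p q i"
  using assms by (induction p q i rule: nu_numerator.induct) auto

lemma prod_q_mult_nuT:
  assumes "\<And>l. 1 \<le> l \<Longrightarrow> l \<le> m \<Longrightarrow> q l > 0" and "j \<le> m"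
  shows "(\<Prod>l\<in>{1..m}. of_nat (q l)) * nuT p q j
       = of_nat ((\<Prod>l\<in>{j<..m}. q l) * nu_numerator p q j)"
proof -
  have "{1..m} = {1..j} \<union> {j<..m}" using \<open>j \<le> m\<close> by auto
  then have "(\<Prod>l\<in>{1..m}. of_nat (q l) :: rat)
      = (\<Prod>l\<in>{1..j}. of_nat (q l)) * of_nat (\<Prod>l\<in>{j<..m}. q l)"
    by (simp add: prod.union_disjoint ivl_disj_int)
  with nuT_eq_nu_numerator[of j q p] assms show ?thesis
    by (simp add: mult_ac)
qed

lemma dvd_n0_of_nuT_relation:
  assumes p_dvd: "\<And>j. 1 \<le> j \<Longrightarrow> j \<le> i \<Longrightarrow> d dvd p j"
    and q_coprime: "\<And>j. 1 \<le> j \<Longrightarrow> j < i \<Longrightarrow> coprime d (q j)"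
    and q_pos: "\<And>j. 1 \<le> j \<Longrightarrow> j \<le> i \<Longrightarrow> q j > 0"
    and n_rel: "of_nat (q i) * nuT p q i = (\<Sum>j<i. of_nat (n j) * nuT p q j)"
    and "1 \<le> i"
  shows "d dvd n 0"
proof -
  obtain m where i: "i = Suc m" using \<open>1 \<le> i\<close> by (cases i) auto
  define Q where "Q = (\<Prod>l\<in>{1..m}. q l)"
  define S where "S = (\<Sum>j<m. n (Suc j) * ((\<Prod>l\<in>{Suc j<..m}. q l) * nu_numerator p q (Suc j)))"
  have "of_nat (nu_numerator p q i) = (of_nat (Q * n 0 + S) :: rat)"
  proof -
    have "of_nat (nu_numerator p q i) = (\<Prod>l\<in>{1..m}. of_nat (q l)) * (of_nat (q i) * nuT p q i)"
      using nuT_eq_nu_numerator[of i q p] q_pos by (simp add: i mult_ac)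
    also have "\<dots> = (\<Prod>l\<in>{1..m}. of_nat (q l)) * (\<Sum>j<i. of_nat (n j) * nuT p q j)"
      by (simp only: n_rel)
    also have "\<dots> = (\<Prod>l\<in>{1..m}. of_nat (q l)) * of_nat (n 0)
        + (\<Sum>j<m. of_nat (n (Suc j)) * ((\<Prod>l\<in>{1..m}. of_nat (q l)) * nuT p q (Suc j)))"
      unfolding i sum.lessThan_Suc_shift by (simp add: distrib_left sum_distrib_left mult_ac)
    also have "\<dots> = of_nat (Q * n 0 + S)"
    proof -
      have "(\<Prod>l\<in>{1..m}. of_nat (q l)) * nuT p q j
          = of_nat ((\<Prod>l\<in>{j<..m}. q l) * nu_numerator p q j)" if "j \<le> m" for j
        using prod_q_mult_nuT[OF _ that] q_pos i by simp
      then show ?thesis by (simp add: Q_def S_def)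
    qed
    finally show ?thesis .
  qed
  then have N: "nu_numerator p q i = Q * n 0 + S" by (simp only: of_nat_eq_iff)
  have "d dvd S" unfolding S_def
    using p_dvd i by (intro dvd_sum dvd_mult dvd_nu_numerator) auto
  moreover have "d dvd nu_numerator p q i" using p_dvd \<open>1 \<le> i\<close> by (rule dvd_nu_numerator)
  ultimately have "d dvd Q * n 0" by (simp add: N dvd_add_left_iff)
  moreover have "coprime d Q" unfolding Q_def
    using q_coprime i by (intro prod_coprime_right) auto
  ultimately show ?thesis by (simp add: coprime_dvd_mult_right_iff)
qed

theorem corollary7p2:
  fixes p q :: "nat \<Rightarrow> nat"
    and n :: "nat \<Rightarrow> nat \<Rightarrow> nat"
    and lam :: "nat \<Rightarrow> 'k::{alg_closed_field, field_char_0}"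
    and k :: nat
  assumes "k > 0"
    and pq_pos: "\<And>i. 1 \<le> i \<Longrightarrow> i \<le> k \<Longrightarrow> p i > 0 \<and> q i > 0"
    and pq_coprime: "\<And>i. 1 \<le> i \<Longrightarrow> i \<le> k \<Longrightarrow> coprime (p i) (q i)"
    and n_bound: "\<And>i j. 1 \<le> i \<Longrightarrow> i \<le> k \<Longrightarrow> 1 \<le> j \<Longrightarrow> j < i \<Longrightarrow> n i j < q j"
    and n_rel: "\<And>i. 1 \<le> i \<Longrightarrow> i \<le> k \<Longrightarrow>
                  of_nat (q i) * nuT p q i = (\<Sum>j<i. of_nat (n i j) * nuT p q j)"
    and lam_nz: "\<And>i. 1 \<le> i \<Longrightarrow> i \<le> k \<Longrightarrow> lam i \<noteq> 0"
  shows "\<forall>i\<in>{2..k+1}. \<forall>a. x_power_occurs (Tpoly q n lam i) a \<longrightarrow> Gcd (p ` {1..k}) dvd a"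
proof -
  define d where "d = Gcd (p ` {1..k})"
  have p_dvd: "d dvd p j" if "1 \<le> j" "j \<le> k" for j
    unfolding d_def using that by (intro Gcd_dvd) auto
  have q_coprime: "coprime d (q j)" if "1 \<le> j" "j \<le> k" for j
    using coprime_divisors[OF p_dvd[OF that] dvd_refl pq_coprime[OF that]] .
  have "d dvd n i 0" if "1 \<le> i" "i \<le> k" for i
    using that p_dvd q_coprime pq_pos n_rel[OF that] by (intro dvd_n0_of_nuT_relation[of i]) auto
  then have "x_exponents_dvd d (Tpoly q n lam i)" if "2 \<le> i" "i \<le> k + 1" for i
    using that by (intro x_exponents_dvd_Tpoly[of k]) auto
  then show ?thesis
    unfolding x_power_occurs_def x_exponents_dvd_def exponents_dvd_def d_def by auto
qed

end
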